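(* Let $(\mathfrak g,\Delta)$ be a quasitriangular Hom-Lie bialgebra, where $(\mathfrak{g},[\cdot,\cdot]_{\mathfrak{g}},\phi_{\mathfrak{g}})$ is finite-dimensional and $\Delta(x)=(\mathrm{ad}_x\otimes\phi_{\mathfrak g}+\phi_{\mathfrak g}\otimes\mathrm{ad}_x)r$ for a solution $r$ of the classical Hom-Yang-Baxter equation with $(\phi_{\mathfrak g}\otimes\mathrm{Id})r=(\mathrm{Id}\otimes\phi_{\mathfrak g})r$. Then $r^\sharp\phi_{\mathfrak g}^*:\mathfrak g^*\to\mathfrak g$ is a homomorphism of Hom-Lie algebras from $(\mathfrak g^*,[\cdot,\cdot]_{\mathfrak g^*},\phi_{\mathfrak g}^* )$ to $(\mathfrak{g},[\cdot,\cdot]_{\mathfrak{g}},\phi_{\mathfrak{g}})$, where $\langle[a,b]_{\mathfrak g^*},x\rangle=\langle\Delta(x),a\otimes b\rangle$.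
   Context: A Hom-Lie algebra $(\mathfrak{h},[\cdot,\cdot]_{\mathfrak{h}},\phi_{\mathfrak{h}})$: skew-symmetric bilinear bracket and linear map with $\phi_{\mathfrak h}[x,y]=[\phi_{\mathfrak h}x,\phi_{\mathfrak h}y]$ and $[\phi_{\mathfrak h}(x),[y,z]]+[\phi_{\mathfrak h}(y),[z,x]]+[\phi_{\mathfrak h}(z),[x,y]]=0$; weakly involutive if $[\phi_{\mathfrak h}^2(x),y]=[x,y]$. A homomorphism $f:\mathfrak h\to\mathfrak k$ of Hom-Lie algebras satisfies $f[x,y]=[f(x),f(y)]$ and $f\phi_{\mathfrak h}=\phi_{\mathfrak k}f$. $\mathrm{ad}_xy=[x,y]$; for $t\in\mathfrak g\otimes\mathfrak g$, $\mathrm{ad}_zt=(\mathrm{ad}_z\otimes\phi_{\mathfrak g}+\phi_{\mathfrak g}\otimes\mathrm{ad}_z)t$. $r^\sharp:\mathfrak g^*\to\mathfrak g$, $\langle r^\sharp(a),b\rangle=\langle r,a\otimes b\rangle$. For $r=\sum_ix_i\otimes y_i$, $[r,r]_{\mathfrak g}=\sum_{i,j}([x_i,x_j]\otimes\phi_{\mathfrak g}(y_i)\otimes\phi_{\mathfrak g}(y_j)+\phi_{\mathfrak g}(x_i)\otimes[y_i,x_j]\otimes\phi_{\mathfrak g}(y_j)+\phi_{\mathfrak g}(x_i)\otimes\phi_{\mathfrak g}(x_j)\otimes[y_i,y_j])$; the classical Hom-Yang-Baxter equation is $[r,r]_{\mathfrak g}=0$. A Hom-Lie bialgebra $(\mathfrak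 g,\Delta)$: weakly involutive $\mathfrak g$ and $\Delta:\mathfrak g\to\mathfrak g\otimes\mathfrak g$ such that $(\mathfrak g^*,[\cdot,\cdot]_{\mathfrak g^*},\phi_{\mathfrak g}^* )$ with $\langle[a,b]_{\mathfrak g^*},x\rangle=\langle\Delta(x),a\otimes b\rangle$ is a weakly involutive Hom-Lie algebra and $\Delta[x,y]=\mathrm{ad}_{\phi_{\mathfrak g}(x)}\Delta(y)-\mathrm{ad}_{\phi_{\mathfrak g}(y)}\Delta(x)$. It is coboundary if $\Delta(x)=\mathrm{ad}_xr$ with $(\phi_{\mathfrak g}\otimes\mathrm{Id})r=(\mathrm{Id}\otimes\phi_{\mathfrak g})r$, and quasitriangular if moreover $r$ solves the classical Hom-Yang-Baxter equation. *)

theory Defs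
  imports Main "HOL-Library.Function_Algebras"
begin

text \<open>A finite-dimensional vector space over a field 'a is represented in coordinates as
  'n \<Rightarrow> 'a with 'n a finite index type (a basis).  The dual space is represented by the
  same type via the dual basis, with pairing pair a x = sum of a i * x i.  The tensor square
  g (x) g is represented as 'n \<Rightarrow> 'n \<Rightarrow> 'a (coefficients w.r.t. e_i (x) e_j), and the
  triple tensor power as 'n \<Rightarrow> 'n \<Rightarrow> 'n \<Rightarrow> 'a.\<close>

type_synonym ('n,'a) vec = "'n \<Rightarrow> 'a"
type_synonym ('n,'a) ten2 = "'n \<Rightarrow> 'n \<Rightarrow> 'a"
type_synonym ('n,'a) ten3 = "'n \<Rightarrow> 'n \<Rightarrow> 'n \<Rightarrow> 'a"

definition smul :: "'a::field \<Rightarrow> ('n,'a) vec \<Rightarrow> ('n,'a) vec" where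
  "smul c x = (\<lambda>i. c * x i)"

definition bvec :: "'n \<Rightarrow> ('n,'a::field) vec" where
  "bvec i = (\<lambda>j. if j = i then 1 else 0)"

definition pair :: "('n::finite,'a::field) vec \<Rightarrow> ('n,'a) vec \<Rightarrow> 'a" where
  "pair a x = (\<Sum>i\<in>UNIV. a i * x i)"

definition lin :: "(('n,'a::field) vec \<Rightarrow> ('m,'a) vec) \<Rightarrow> bool" where
  "lin f \<longleftrightarrow> (\<forall>x y. f (x + y) = f x + f y) \<and> (\<forall>c x. f (smul c x) = smul c (f x))"

definition bilin :: "(('n,'a::field) vec \<Rightarrow> ('n,'a) vec \<Rightarrow> ('n,'a) vec) \<Rightarrow> bool" where
  "bilin br \<longleftrightarrow> (\<forall>x. lin (br x)) \<and> (\<forall>y. lin (\<lambda>x. br x y))"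

definition hom_lie :: "(('n,'a::field) vec \<Rightarrow> ('n,'a) vec \<Rightarrow> ('n,'a) vec)
    \<Rightarrow> (('n,'a) vec \<Rightarrow> ('n,'a) vec) \<Rightarrow> bool" where
  "hom_lie br phi \<longleftrightarrow> bilin br \<and> lin phi
     \<and> (\<forall>x y. br x y = - br y x)
     \<and> (\<forall>x y. phi (br x y) = br (phi x) (phi y))
     \<and> (\<forall>x y z. br (phi x) (br y z) + br (phi y) (br z x) + br (phi z) (br x y) = 0)"

definition weakly_involutive :: "(('n,'a::field) vec \<Rightarrow> ('n,'a) vec \<Rightarrow> ('n,'a) vec)
    \<Rightarrow> (('n,'a) vec \<Rightarrow> ('n,'a) vec) \<Rightarrow> bool" where
  "weakly_involutive br phi \<longleftrightarrow> hom_lie br phi \<and> (\<forall>x y. br (phi (phi x)) y = br x y)"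

definition hom_lie_hom :: "(('n,'a::field) vec \<Rightarrow> ('n,'a) vec \<Rightarrow> ('n,'a) vec)
    \<Rightarrow> (('n,'a) vec \<Rightarrow> ('n,'a) vec)
    \<Rightarrow> (('m,'a) vec \<Rightarrow> ('m,'a) vec \<Rightarrow> ('m,'a) vec)
    \<Rightarrow> (('m,'a) vec \<Rightarrow> ('m,'a) vec)
    \<Rightarrow> (('n,'a) vec \<Rightarrow> ('m,'a) vec) \<Rightarrow> bool" where
  "hom_lie_hom br1 phi1 br2 phi2 f \<longleftrightarrow>
     (\<forall>x y. f (br1 x y) = br2 (f x) (f y)) \<and> (\<forall>x. f (phi1 x) = phi2 (f x))"

definition tens :: "('n,'a::field) vec \<Rightarrow> ('n,'a) vec \<Rightarrow> ('n,'a) ten2" where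
  "tens x y = (\<lambda>i j. x i * y j)"

definition tens3 :: "('n,'a::field) vec \<Rightarrow> ('n,'a) vec \<Rightarrow> ('n,'a) vec \<Rightarrow> ('n,'a) ten3" where
  "tens3 x y z = (\<lambda>i j k. x i * y j * z k)"

definition tmap :: "(('n::finite,'a::field) vec \<Rightarrow> ('n,'a) vec) \<Rightarrow> (('n,'a) vec \<Rightarrow> ('n,'a) vec)
    \<Rightarrow> ('n,'a) ten2 \<Rightarrow> ('n,'a) ten2" where
  "tmap f g t = (\<Sum>i\<in>UNIV. \<Sum>j\<in>UNIV. (\<lambda>k l. t i j * (tens (f (bvec i)) (g (bvec j))) k l))"

definition ad2 :: "(('n::finite,'a::field) vec \<Rightarrow> ('n,'a) vec \<Rightarrow> ('n,'a) vec)
    \<Rightarrow> (('n,'a) vec \<Rightarrow> ('n,'a) vec) \<Rightarrow> ('n,'a) vec \<Rightarrow> ('n,'a) ten2 \<Rightarrow> ('n,'a) ten2" where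
  "ad2 br phi z t = tmap (br z) phi t + tmap phi (br z) t"

definition pair2 :: "('n::finite,'a::field) ten2 \<Rightarrow> ('n,'a) vec \<Rightarrow> ('n,'a) vec \<Rightarrow> 'a" where
  "pair2 t a b = (\<Sum>i\<in>UNIV. \<Sum>j\<in>UNIV. t i j * a i * b j)"

text \<open>Dual bracket: <[a,b]_{g*}, x> = <Delta x, a (x) b>, in dual-basis coordinates.\<close>
definition dual_br :: "(('n::finite,'a::field) vec \<Rightarrow> ('n,'a) ten2)
    \<Rightarrow> ('n,'a) vec \<Rightarrow> ('n,'a) vec \<Rightarrow> ('n,'a) vec" where
  "dual_br Delta a b = (\<lambda>j. pair2 (Delta (bvec j)) a b)"

text \<open>Dual map phi*: <phi* a, x> = <a, phi x>.\<close>
definition dual_map :: "(('n::finite,'a::field) vec \<Rightarrow> ('n,'a) vec) \<Rightarrow> ('n,'a) vec \<Rightarrow> ('n,'a) vec" where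
  "dual_map phi a = (\<lambda>j. pair a (phi (bvec j)))"

text \<open>r-sharp: <r#(a), b> = <r, a (x) b>.\<close>
definition rsharp :: "('n::finite,'a::field) ten2 \<Rightarrow> ('n,'a) vec \<Rightarrow> ('n,'a) vec" where
  "rsharp r a = (\<lambda>j. \<Sum>i\<in>UNIV. r i j * a i)"

definition rr :: "(('n::finite,'a::field) vec \<Rightarrow> ('n,'a) vec \<Rightarrow> ('n,'a) vec)
    \<Rightarrow> (('n,'a) vec \<Rightarrow> ('n,'a) vec) \<Rightarrow> ('n,'a) ten2 \<Rightarrow> ('n,'a) ten3" where
  "rr br phi r = (\<Sum>i\<in>UNIV. \<Sum>j\<in>UNIV. \<Sum>k\<in>UNIV. \<Sum>l\<in>UNIV.
      (\<lambda>p q s. r i j * r k l *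
        (tens3 (br (bvec i) (bvec k)) (phi (bvec j)) (phi (bvec l)) p q s
       + tens3 (phi (bvec i)) (br (bvec j) (bvec k)) (phi (bvec l)) p q s
       + tens3 (phi (bvec i)) (phi (bvec k)) (br (bvec j) (bvec l)) p q s)))"

definition CHYBE :: "(('n::finite,'a::field) vec \<Rightarrow> ('n,'a) vec \<Rightarrow> ('n,'a) vec)
    \<Rightarrow> (('n,'a) vec \<Rightarrow> ('n,'a) vec) \<Rightarrow> ('n,'a) ten2 \<Rightarrow> bool" where
  "CHYBE br phi r \<longleftrightarrow> rr br phi r = 0"

definition hom_lie_bialgebra :: "(('n::finite,'a::field) vec \<Rightarrow> ('n,'a) vec \<Rightarrow> ('n,'a) vec)
    \<Rightarrow> (('n,'a) vec \<Rightarrow> ('n,'a) vec) \<Rightarrow> (('n,'a) vec \<Rightarrow> ('n,'a) ten2) \<Rightarrow> bool" where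
  "hom_lie_bialgebra br phi Delta \<longleftrightarrow>
     weakly_involutive br phi
     \<and> weakly_involutive (dual_br Delta) (dual_map phi)
     \<and> (\<forall>x y. Delta (br x y) = ad2 br phi (phi x) (Delta y) - ad2 br phi (phi y) (Delta x))"

definition coboundary_by :: "(('n::finite,'a::field) vec \<Rightarrow> ('n,'a) vec \<Rightarrow> ('n,'a) vec)
    \<Rightarrow> (('n,'a) vec \<Rightarrow> ('n,'a) vec) \<Rightarrow> (('n,'a) vec \<Rightarrow> ('n,'a) ten2) \<Rightarrow> ('n,'a) ten2 \<Rightarrow> bool" where
  "coboundary_by br phi Delta r \<longleftrightarrow> hom_lie_bialgebra br phi Delta
     \<and> (\<forall>x. Delta x = ad2 br phi x r) \<and> tmap phi id r = tmap id phi r"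

definition quasitriangular_by :: "(('n::finite,'a::field) vec \<Rightarrow> ('n,'a) vec \<Rightarrow> ('n,'a) vec)
    \<Rightarrow> (('n,'a) vec \<Rightarrow> ('n,'a) vec) \<Rightarrow> (('n,'a) vec \<Rightarrow> ('n,'a) ten2) \<Rightarrow> ('n,'a) ten2 \<Rightarrow> bool" where
  "quasitriangular_by br phi Delta r \<longleftrightarrow> coboundary_by br phi Delta r \<and> CHYBE br phi r"

end

theory Submission
  imports Defs
begin

(* Write psi for r# o phi* and r' for the flip of r.  Since (phi (x) Id) r = (Id (x) phi) r,
   r# and r'# intertwine phi* with phi; hence psi commutes with the twisting maps, and
   <c, psi [a,b]> = <[a,b], x> with x = r'# phi* c.  The coboundary formula for Delta turns
   this into <a, [x, r'# phi* b]> + <b, [x, psi a]>.  Pairing [r,r] with a (x) b (x) c gives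
   <a, [r'# phi* b, x]> + <b, [psi a, x]> + <c, [psi a, psi b]>, so the classical
   Hom-Yang-Baxter equation and skew-symmetry yield <c, psi [a,b]> = <c, [psi a, psi b]>. *)

lemma sum_fun_apply: "sum F A x = (\<Sum>i\<in>A. F i x)"
  by (induction A rule: infinite_finite_induct) auto

lemma sum_bvec_mult: "(\<Sum>i\<in>UNIV. bvec (s::'n::finite) i * (f i :: 'a::field)) = f s"
  by (simp add: bvec_def if_distrib[of "\<lambda>u. u * _"] cong: if_cong)

lemma sum_mult_bvec: "(\<Sum>i\<in>UNIV. (f i :: 'a::field) * bvec i (s::'n::finite)) = f s"
  by (simp add: bvec_def if_distrib[of "\<lambda>u. _ * u"] cong: if_cong)

lemma sum_rotate3:
  "(\<Sum>x\<in>X. \<Sum>y\<in>Y. \<Sum>z\<in>Z. f x y z) = (\<Sum>z\<in>Z. \<Sum>x\<in>X. \<Sum>y\<in>Y. f x y z)"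
  by (subst sum.swap, rule sum.cong[OF refl], rule sum.swap)

lemma sum_swap_pairs:
  "(\<Sum>u\<in>U. \<Sum>v\<in>V. \<Sum>i\<in>I. \<Sum>j\<in>J. f u v i j)
    = (\<Sum>i\<in>I. \<Sum>j\<in>J. \<Sum>u\<in>U. \<Sum>v\<in>V. f u v i j)"
proof -
  have "(\<Sum>u\<in>U. \<Sum>v\<in>V. \<Sum>i\<in>I. \<Sum>j\<in>J. f u v i j)
      = (\<Sum>u\<in>U. \<Sum>i\<in>I. \<Sum>j\<in>J. \<Sum>v\<in>V. f u v i j)"
    by (intro sum.cong refl) (subst sum.swap, intro sum.cong refl sum.swap)
  also have "\<dots> = (\<Sum>i\<in>I. \<Sum>j\<in>J. \<Sum>u\<in>U. \<Sum>v\<in>V. f u v i j)"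
    by (subst sum.swap, intro sum.cong refl sum.swap)
  finally show ?thesis .
qed

lemma pair_bvec_left [simp]: "pair (bvec s) x = x s"
  by (simp add: pair_def sum_bvec_mult)

lemma pair_uminus_right [simp]: "pair a (- x) = - pair a x"
  by (simp add: pair_def sum_negf)

lemma vec_eq_pairI:
  assumes "\<And>c. pair c x = pair c y"
  shows "x = y"
proof
  fix s
  show "x s = y s" using assms[of "bvec s"] by simp
qed

lemma smul_zero_left [simp]: "smul 0 x = 0"
  by (simp add: smul_def zero_fun_def)

lemma lin_zero: "lin f \<Longrightarrow> f 0 = 0"
  unfolding lin_def by (metis smul_zero_left)

lemma lin_sum: "lin f \<Longrightarrow> f (sum F A) = (\<Sum>i\<in>A. f (F i))"
  by (induction A rule: infinite_finite_induct) (auto simp: lin_zero lin_def)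

lemma vec_eq_sum_bvec: "(x::('n::finite,'a::field) vec) = (\<Sum>j\<in>UNIV. smul (x j) (bvec j))"
  by (rule ext) (simp add: sum_fun_apply smul_def sum_mult_bvec)

lemma lin_apply_coord:
  "lin f \<Longrightarrow> f (x::('n::finite,'a::field) vec) k = (\<Sum>j\<in>UNIV. x j * f (bvec j) k)"
proof -
  assume "lin f"
  then have "f x = (\<Sum>j\<in>UNIV. smul (x j) (f (bvec j)))"
    by (subst vec_eq_sum_bvec) (simp add: lin_sum lin_def)
  then show ?thesis by (simp add: sum_fun_apply smul_def)
qed

lemma pair_lin_expand:
  "lin f \<Longrightarrow> pair a (f (x::('m::finite,'a::field) vec)) = (\<Sum>j\<in>UNIV. x j * pair a (f (bvec j)))"
  by (simp add: pair_def lin_apply_coord sum_distrib_left mult.left_commute) (rule sum.swap)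

lemma pair_bilin_expand:
  assumes "bilin br"
  shows "pair a (br u v) = (\<Sum>i\<in>UNIV. \<Sum>k\<in>UNIV. u i * v k * pair a (br (bvec i) (bvec k)))"
proof -
  have "pair a (br u v) = (\<Sum>i\<in>UNIV. u i * pair a (br (bvec i) v))"
    using assms by (simp add: bilin_def pair_lin_expand[of "\<lambda>x. br x v"])
  also have "\<dots> = (\<Sum>i\<in>UNIV. u i * (\<Sum>k\<in>UNIV. v k * pair a (br (bvec i) (bvec k))))"
    using assms by (simp add: bilin_def pair_lin_expand[of "br _"])
  finally show ?thesis
    by (simp add: sum_distrib_left mult.assoc)
qed

lemma pair_dual_map: "lin phi \<Longrightarrow> pair (dual_map phi a) x = pair a (phi x)"
  by (subst pair_lin_expand[of phi]) (simp_all add: pair_def dual_map_def mult.commute)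

definition ten_transpose :: "('n,'a) ten2 \<Rightarrow> ('n,'a) ten2" where
  "ten_transpose t = (\<lambda>i j. t j i)"

lemma ten_transpose_ten_transpose [simp]: "ten_transpose (ten_transpose t) = t"
  by (simp add: ten_transpose_def)

lemma pair_rsharp: "pair c (rsharp r d) = pair d (rsharp (ten_transpose r) c)"
  by (simp add: pair_def rsharp_def ten_transpose_def sum_distrib_left)
    (subst sum.swap, simp add: mult_ac)

lemma tmap_apply:
  "tmap f g t k l = (\<Sum>i\<in>UNIV. \<Sum>j\<in>UNIV. t i j * f (bvec i) k * g (bvec j) l)"
  by (simp add: tmap_def tens_def sum_fun_apply mult.assoc)

lemma tmap_ten_transpose: "tmap f g (ten_transpose t) = ten_transpose (tmap g f t)"
  by (simp add: fun_eq_iff tmap_apply ten_transpose_def) (subst sum.swap, simp add: mult_ac)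

lemma tmap_id_right: "tmap f id t k l = (\<Sum>i\<in>UNIV. t i l * f (bvec i) k)"
  by (simp add: tmap_apply sum_mult_bvec)

lemma tmap_id_left: "tmap id g t k l = (\<Sum>j\<in>UNIV. t k j * g (bvec j) l)"
proof -
  have "tmap id g t = ten_transpose (tmap g id (ten_transpose t))"
    using tmap_ten_transpose[of id g "ten_transpose t"] by simp
  then show ?thesis
    by (simp add: tmap_id_right ten_transpose_def)
qed

lemma rsharp_dual_map_apply:
  "rsharp r (dual_map phi a) m = (\<Sum>k\<in>UNIV. a k * tmap phi id r k m)"
  by (simp add: rsharp_def dual_map_def pair_def tmap_id_right sum_distrib_left)
    (subst sum.swap, simp add: mult_ac)

lemma lin_rsharp_apply:
  "lin phi \<Longrightarrow> phi (rsharp r a) m = (\<Sum>k\<in>UNIV. a k * tmap id phi r k m)"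
  by (subst lin_apply_coord)
    (simp_all add: rsharp_def tmap_id_left sum_distrib_left sum_distrib_right,
     subst sum.swap, simp add: mult_ac)

lemma rsharp_dual_map:
  assumes "lin phi" and "tmap phi id r = tmap id phi r"
  shows "rsharp r (dual_map phi a) = phi (rsharp r a)"
  using assms by (simp add: fun_eq_iff rsharp_dual_map_apply lin_rsharp_apply)

lemma pair_rsharp_dual_map:
  assumes phi: "lin phi" and r: "tmap phi id r = tmap id phi r"
  shows "pair c (rsharp r (dual_map phi d)) = pair d (rsharp (ten_transpose r) (dual_map phi c))"
proof -
  have "tmap phi id (ten_transpose r) = tmap id phi (ten_transpose r)"
    by (simp add: tmap_ten_transpose r)
  then have "phi (rsharp (ten_transpose r) c) = rsharp (ten_transpose r) (dual_map phi c)"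
    using phi by (simp add: rsharp_dual_map)
  moreover have "pair c (rsharp r (dual_map phi d)) = pair d (phi (rsharp (ten_transpose r) c))"
    using phi by (simp only: pair_rsharp[of c] pair_dual_map)
  ultimately show ?thesis
    by simp
qed

lemma pair2_add: "pair2 (s + t) a b = pair2 s a b + pair2 t a b"
  by (simp add: pair2_def distrib_right sum.distrib)

lemma pair2_tmap:
  "pair2 (tmap f g t) a b = (\<Sum>i\<in>UNIV. \<Sum>j\<in>UNIV. t i j * pair a (f (bvec i)) * pair b (g (bvec j)))"
  by (simp add: pair2_def pair_def tmap_apply sum_distrib_left sum_distrib_right)
    (subst sum_swap_pairs, simp add: mult_ac, intro sum.cong refl sum.swap)

lemma pair2_ad2:
  assumes "bilin br"
  shows "pair2 (ad2 br phi x r) a b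
    = pair a (br x (rsharp (ten_transpose r) (dual_map phi b)))
      + pair b (br x (rsharp r (dual_map phi a)))"
proof -
  have lin_br: "lin (br x)"
    using assms by (simp add: bilin_def)
  have "pair2 (tmap (br x) phi r) a b = pair a (br x (rsharp (ten_transpose r) (dual_map phi b)))"
    by (subst pair_lin_expand[OF lin_br])
      (simp add: pair2_tmap rsharp_def ten_transpose_def dual_map_def sum_distrib_left
        sum_distrib_right mult_ac)
  moreover have "pair2 (tmap phi (br x) r) a b = pair b (br x (rsharp r (dual_map phi a)))"
    by (subst pair_lin_expand[OF lin_br])
      (simp add: pair2_tmap rsharp_def dual_map_def sum_distrib_left sum_distrib_right,
        subst sum.swap, simp add: mult_ac)
  ultimately show ?thesis
    by (simp add: ad2_def pair2_add)
qed

lemma pair_dual_br_coboundary: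
  assumes br: "bilin br" and Delta: "\<And>x. Delta x = ad2 br phi x r"
  shows "pair (dual_br Delta a b) x
    = pair a (br x (rsharp (ten_transpose r) (dual_map phi b)))
      + pair b (br x (rsharp r (dual_map phi a)))"
proof -
  have lin_br_left: "lin (\<lambda>y. br y v)" for v
    using br by (simp add: bilin_def)
  have "pair (dual_br Delta a b) x = (\<Sum>j\<in>UNIV. x j * pair2 (Delta (bvec j)) a b)"
    by (simp add: pair_def dual_br_def mult.commute)
  then show ?thesis
    by (simp add: Delta pair2_ad2[OF br] pair_lin_expand[OF lin_br_left, of _ x] distrib_left
        sum.distrib)
qed

definition pair3 ::
    "('n::finite,'a::field) ten3 \<Rightarrow> ('n,'a) vec \<Rightarrow> ('n,'a) vec \<Rightarrow> ('n,'a) vec \<Rightarrow> 'a" where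
  "pair3 t a b c = (\<Sum>i\<in>UNIV. \<Sum>j\<in>UNIV. \<Sum>k\<in>UNIV. t i j k * a i * b j * c k)"

lemma pair3_sum: "pair3 (sum F A) a b c = (\<Sum>x\<in>A. pair3 (F x) a b c)"
proof (induction A rule: infinite_finite_induct)
  case (insert x A)
  then show ?case
    by (simp add: pair3_def distrib_right sum.distrib)
qed (simp_all add: pair3_def)

lemma pair3_add: "pair3 (\<lambda>p q s. t p q s + t' p q s) a b c = pair3 t a b c + pair3 t' a b c"
  by (simp add: pair3_def distrib_right sum.distrib)

lemma pair3_scale: "pair3 (\<lambda>p q s. w * t p q s) a b c = w * pair3 t a b c"
  by (simp add: pair3_def sum_distrib_left mult.assoc)

lemma pair3_tens3: "pair3 (tens3 x y z) a b c = pair a x * (pair b y * pair c z)"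
proof -
  have "pair a x * (pair b y * pair c z)
      = (\<Sum>i\<in>UNIV. a i * x i * (\<Sum>j\<in>UNIV. b j * y j * (\<Sum>k\<in>UNIV. c k * z k)))"
    by (simp add: pair_def sum_distrib_right)
  also have "\<dots> = pair3 (tens3 x y z) a b c"
    by (simp add: pair3_def tens3_def sum_distrib_left mult_ac)
  finally show ?thesis ..
qed

lemma pair3_rr_coord:
  "pair3 (rr br phi r) a b c = (\<Sum>i\<in>UNIV. \<Sum>j\<in>UNIV. \<Sum>k\<in>UNIV. \<Sum>l\<in>UNIV. r i j * r k l *
      (pair a (br (bvec i) (bvec k)) * dual_map phi b j * dual_map phi c l
     + dual_map phi a i * pair b (br (bvec j) (bvec k)) * dual_map phi c l
     + dual_map phi a i * dual_map phi b k * pair c (br (bvec j) (bvec l))))"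
  by (simp add: rr_def pair3_sum pair3_add pair3_scale pair3_tens3 dual_map_def mult_ac)

lemma pair_bilin_rsharp:
  assumes br: "bilin br"
  shows "pair a (br (rsharp s x) (rsharp t y)) = (\<Sum>i\<in>UNIV. \<Sum>j\<in>UNIV. \<Sum>k\<in>UNIV. \<Sum>l\<in>UNIV.
      s i j * x i * (t k l * y k) * pair a (br (bvec j) (bvec l)))"
proof -
  have "pair a (br (rsharp s x) (rsharp t y)) = (\<Sum>j\<in>UNIV. \<Sum>l\<in>UNIV. \<Sum>k\<in>UNIV. \<Sum>i\<in>UNIV.
      s i j * x i * (t k l * y k) * pair a (br (bvec j) (bvec l)))"
    by (simp only: pair_bilin_expand[OF br, of a "rsharp s x"])
      (simp add: rsharp_def sum_distrib_left sum_distrib_right)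
  also have "\<dots> = (\<Sum>j\<in>UNIV. \<Sum>i\<in>UNIV. \<Sum>l\<in>UNIV. \<Sum>k\<in>UNIV.
      s i j * x i * (t k l * y k) * pair a (br (bvec j) (bvec l)))"
    by (rule sum.cong[OF refl], rule sum_rotate3)
  also have "\<dots> = (\<Sum>i\<in>UNIV. \<Sum>j\<in>UNIV. \<Sum>l\<in>UNIV. \<Sum>k\<in>UNIV.
      s i j * x i * (t k l * y k) * pair a (br (bvec j) (bvec l)))"
    by (rule sum.swap)
  also have "\<dots> = (\<Sum>i\<in>UNIV. \<Sum>j\<in>UNIV. \<Sum>k\<in>UNIV. \<Sum>l\<in>UNIV.
      s i j * x i * (t k l * y k) * pair a (br (bvec j) (bvec l)))"
    by (rule sum.cong[OF refl], rule sum.cong[OF refl], rule sum.swap)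
  finally show ?thesis .
qed

lemma pair3_rr:
  assumes br: "bilin br"
  shows "pair3 (rr br phi r) a b c =
      pair a (br (rsharp (ten_transpose r) (dual_map phi b)) (rsharp (ten_transpose r) (dual_map phi c)))
    + pair b (br (rsharp r (dual_map phi a)) (rsharp (ten_transpose r) (dual_map phi c)))
    + pair c (br (rsharp r (dual_map phi a)) (rsharp r (dual_map phi b)))"
proof -
  define A where "A = dual_map phi a"
  define B where "B = dual_map phi b"
  define C where "C = dual_map phi c"
  have 1: "pair a (br (rsharp (ten_transpose r) B) (rsharp (ten_transpose r) C))
      = (\<Sum>i\<in>UNIV. \<Sum>j\<in>UNIV. \<Sum>k\<in>UNIV. \<Sum>l\<in>UNIV.
          r i j * r k l * (pair a (br (bvec i) (bvec k)) * B j * C l))"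
    unfolding pair_bilin_rsharp[OF br] ten_transpose_def
    by (subst sum.swap, rule sum.cong[OF refl], rule sum.cong[OF refl], subst sum.swap)
      (simp add: mult_ac)
  have 2: "pair b (br (rsharp r A) (rsharp (ten_transpose r) C))
      = (\<Sum>i\<in>UNIV. \<Sum>j\<in>UNIV. \<Sum>k\<in>UNIV. \<Sum>l\<in>UNIV.
          r i j * r k l * (A i * pair b (br (bvec j) (bvec k)) * C l))"
    unfolding pair_bilin_rsharp[OF br] ten_transpose_def
    by (rule sum.cong[OF refl], rule sum.cong[OF refl], subst sum.swap) (simp add: mult_ac)
  have 3: "pair c (br (rsharp r A) (rsharp r B))
      = (\<Sum>i\<in>UNIV. \<Sum>j\<in>UNIV. \<Sum>k\<in>UNIV. \<Sum>l\<in>UNIV.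
          r i j * r k l * (A i * B k * pair c (br (bvec j) (bvec l))))"
    unfolding pair_bilin_rsharp[OF br] by (simp add: mult_ac)
  show ?thesis
    using 1 2 3 by (simp add: pair3_rr_coord A_def B_def C_def distrib_left sum.distrib)
qed

lemma rsharp_dual_map_dual_br:
  assumes br: "bilin br" and phi: "lin phi" and skew: "\<And>x y. br x y = - br y x"
    and Delta: "\<And>x. Delta x = ad2 br phi x r" and r_phi: "tmap phi id r = tmap id phi r"
    and r_CHYBE: "CHYBE br phi r"
  shows "rsharp r (dual_map phi (dual_br Delta a b))
    = br (rsharp r (dual_map phi a)) (rsharp r (dual_map phi b))"
proof (rule vec_eq_pairI)
  fix c
  define u where "u = rsharp (ten_transpose r) (dual_map phi b)"
  define v where "v = rsharp r (dual_map phi a)"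
  define w where "w = rsharp (ten_transpose r) (dual_map phi c)"
  have "pair a (br u w) + pair b (br v w) + pair c (br v (rsharp r (dual_map phi b)))
      = pair3 (rr br phi r) a b c"
    unfolding u_def v_def w_def by (rule pair3_rr[OF br, symmetric])
  also have "\<dots> = 0"
    using r_CHYBE by (simp add: CHYBE_def pair3_def)
  finally have "pair c (br v (rsharp r (dual_map phi b))) = pair a (br w u) + pair b (br w v)"
    by (simp add: skew[of u w] skew[of v w] algebra_simps)
  also have "\<dots> = pair (dual_br Delta a b) w"
    unfolding u_def v_def using br Delta by (rule pair_dual_br_coboundary[symmetric])
  also have "\<dots> = pair c (rsharp r (dual_map phi (dual_br Delta a b)))"
    unfolding w_def using phi r_phi by (rule pair_rsharp_dual_map[symmetric])
  finally show "pair c (rsharp r (dual_map phi (dual_br Delta a b)))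
      = pair c (br (rsharp r (dual_map phi a)) (rsharp r (dual_map phi b)))"
    by (simp add: v_def)
qed

theorem corollary4p10:
  fixes br :: "('n::finite, 'a::field) vec \<Rightarrow> ('n,'a) vec \<Rightarrow> ('n,'a) vec"
    and phi :: "('n,'a) vec \<Rightarrow> ('n,'a) vec"
    and Delta :: "('n,'a) vec \<Rightarrow> ('n,'a) ten2"
    and r :: "('n,'a) ten2"
  assumes "quasitriangular_by br phi Delta r"
  shows "hom_lie_hom (dual_br Delta) (dual_map phi) br phi (rsharp r \<circ> dual_map phi)"
proof -
  have "hom_lie br phi" and Delta: "\<And>x. Delta x = ad2 br phi x r"
    and r_phi: "tmap phi id r = tmap id phi r" and r_CHYBE: "CHYBE br phi r"
    using assms
    by (simp_all add: quasitriangular_by_def coboundary_by_def hom_lie_bialgebra_def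
        weakly_involutive_def)
  then have br: "bilin br" and phi: "lin phi" and skew: "\<And>x y. br x y = - br y x"
    unfolding hom_lie_def by blast+
  show ?thesis
    unfolding hom_lie_hom_def comp_apply
    using rsharp_dual_map_dual_br[OF br phi skew Delta r_phi r_CHYBE] rsharp_dual_map[OF phi r_phi]
    by simp
qed

end
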